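(* For all integers $n\ge 4$ and $k\ge 0$, $$A_{n,k}\,b_n^{(k)}+B_{n,k}\,b_{n-1}^{(k)}+C_{n,k}\,b_{n-2}^{(k)}+D_{n,k}\,b_{n-3}^{(k)}+E_{n,k}\,b_{n-4}^{(k)}=0,$$ where $A_{n,k}=(n^2-(k+1)^2)(n^2-k^2)$, $B_{n,k}=-2n(2n-1)(n+k)(n-k-1)$, $C_{n,k}=-2n(n-1)\left(n^2-2n+3-3k(k+1)\right)$, $D_{n,k}=6n(n-1)(n-2)(2n-3)$, $E_{n,k}=9n(n-1)(n-2)(n-3)$.
   Context: Let $X(\theta)=1+2\cos\theta$ and, for $k\ge 0$, $\chi_k(\theta)=1+2\sum_{j=1}^{k}\cos(j\theta)$ (the character of the $(k+1)$-dimensional irreducible representation of the Lie algebra $A_1$). For $n\ge 0$ the integers $b_n^{(k)}$, $0\le k\le n$, are the unique coefficients with $X(\theta)^n=\sum_{k=0}^{n}b_n^{(k)}\chi_k(\theta)$ for all real $\theta$; set $b_n^{(k)}=0$ for $k>n$. *)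

theory Defs
  imports Complex_Main
begin

definition Xfun :: "real \<Rightarrow> real" where
  "Xfun \<theta> = 1 + 2 * cos \<theta>"

definition chi :: "nat \<Rightarrow> real \<Rightarrow> real" where
  "chi k \<theta> = 1 + 2 * (\<Sum>j=1..k. cos (real j * \<theta>))"

definition bcoef :: "nat \<Rightarrow> nat \<Rightarrow> int" where
  "bcoef n k = (if k \<le> n then
     (THE c. (\<forall>\<theta>. Xfun \<theta> ^ n = (\<Sum>i=0..n. real_of_int (c i) * chi i \<theta>))
             \<and> (\<forall>i>n. c i = 0)) k
   else 0)"

end

theory Submission
  imports Defs
begin

text \<open>
  Write \<open>X = z\<^sup>-\<^sup>1 + 1 + z\<close> with \<open>z = e\<^sup>i\<^sup>\<theta>\<close>, and let \<open>t n j\<close> be the trinomial coefficients,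
  i.e. the coefficients of \<open>(z\<^sup>-\<^sup>1 + 1 + z)\<^sup>n\<close>. Since \<open>\<chi>\<^sub>k - \<chi>\<^sub>k\<^sub>-\<^sub>1 = 2 cos k\<theta>\<close>, summation by
  parts turns the cosine expansion of \<open>X\<^sup>n\<close> into its character expansion, and
  \<open>b\<^sub>n\<^sup>(\<^sup>k\<^sup>) = t n k - t n (k + 1)\<close>.

  For fixed \<open>j\<close>, the sequence \<open>n \<mapsto> t n j\<close> is annihilated by the second order operator
  \<open>L\<^sub>c f n = (n\<^sup>2 - c) f n - n (2n - 1) f (n - 1) - 3 n (n - 1) f (n - 2)\<close> with \<open>c = j\<^sup>2\<close>.
  Operators \<open>L\<^sub>c\<close> for different \<open>c\<close> differ by a constant, hence commute, so
  \<open>L\<^bsub>(k+1)\<^sup>2\<^esub> L\<^bsub>k\<^sup>2\<^esub>\<close> annihilates both \<open>t \<cdot> k\<close> and \<open>t \<cdot> (k + 1)\<close>, hence their difference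
  \<open>b\<^sup>(\<^sup>k\<^sup>)\<close>. Expanding this fourth order operator gives the coefficients \<open>A, \<dots>, E\<close>.
\<close>

fun trinomial :: "nat \<Rightarrow> int \<Rightarrow> int" where
  "trinomial 0 j = (if j = 0 then 1 else 0)"
| "trinomial (Suc n) j = trinomial n (j - 1) + trinomial n j + trinomial n (j + 1)"

lemma trinomial_eq_0: "int n < \<bar>j\<bar> \<Longrightarrow> trinomial n j = 0"
proof (induction n arbitrary: j)
  case 0
  then show ?case by simp
next
  case (Suc n)
  then have "trinomial n (j - 1) = 0" "trinomial n j = 0" "trinomial n (j + 1) = 0"
    by (auto intro!: Suc.IH)
  then show ?case by simp
qed

lemma trinomial_uminus: "trinomial n (- j) = trinomial n j"
proof (induction n arbitrary: j)
  case 0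
  then show ?case by simp
next
  case (Suc n)
  have "- j - 1 = - (j + 1)" "- j + 1 = - (j - 1)"
    by simp_all
  then show ?case
    by (simp only: trinomial.simps Suc.IH)
qed

text \<open>This comes from \<open>z (z\<^sup>-\<^sup>1 + 1 + z) P' = n (z - z\<^sup>-\<^sup>1) P\<close> for \<open>P = (z\<^sup>-\<^sup>1 + 1 + z)\<^sup>n\<close>.\<close>

lemma trinomial_contiguous:
  "(j - 1 - int n) * trinomial n (j - 1) + j * trinomial n j + (j + 1 + int n) * trinomial n (j + 1) = 0"
proof (induction n arbitrary: j)
  case 0
  then show ?case by auto
next
  case (Suc n)
  have "(j - 1 - int (Suc n)) * trinomial (Suc n) (j - 1) + j * trinomial (Suc n) j
          + (j + 1 + int (Suc n)) * trinomial (Suc n) (j + 1)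
        = ((j - 1 - 1 - int n) * trinomial n (j - 1 - 1) + (j - 1) * trinomial n (j - 1)
             + (j - 1 + 1 + int n) * trinomial n (j - 1 + 1))
        + ((j - 1 - int n) * trinomial n (j - 1) + j * trinomial n j
             + (j + 1 + int n) * trinomial n (j + 1))
        + ((j + 1 - 1 - int n) * trinomial n (j + 1 - 1) + (j + 1) * trinomial n (j + 1)
             + (j + 1 + 1 + int n) * trinomial n (j + 1 + 1))"
    by (simp add: algebra_simps)
  then show ?case
    by (simp only: Suc.IH add_0_left add_0_right)
qed

lemma sum_int_shift:
  fixes g :: "int \<Rightarrow> real"
  assumes "a - 1 \<le> b"
  shows "(\<Sum>j=a..b. g (j + 1)) = (\<Sum>j=a..b. g j) + g (b + 1) - g a"
  using assms
proof (induction b rule: int_ge_induct)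
  case base
  then show ?case by simp
next
  case (step b)
  then have "{a..b + 1} = insert (b + 1) {a..b}" by auto
  then show ?case using step by simp
qed

lemma Xfun_power_cos_sum_int:
  assumes "int n \<le> N"
  shows "Xfun \<theta> ^ n = (\<Sum>j=-N..N. of_int (trinomial n j) * cos (of_int j * \<theta>))"
  using assms
proof (induction n)
  case 0
  have "(\<Sum>j=-N..N. of_int (trinomial 0 j) * cos (of_int j * \<theta>)) = (\<Sum>j=-N..N. if j = 0 then 1 else 0)"
    by (rule sum.cong) auto
  with 0 show ?case by simp
next
  case (Suc n)
  define t where "t j = (of_int (trinomial n j) :: real)" for j
  have t_N: "t j = 0" if "j = N + 1 \<or> j = N \<or> j = - N \<or> j = - N - 1" for j
    using Suc.prems that by (auto simp: t_def trinomial_eq_0)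
  have up: "(\<Sum>j=-N..N. t j * cos (of_int j * \<theta> + \<theta>)) = (\<Sum>j=-N..N. t (j - 1) * cos (of_int j * \<theta>))"
    using sum_int_shift[of "-N" N "\<lambda>j. t (j - 1) * cos (of_int j * \<theta>)"] Suc.prems t_N
    by (simp add: algebra_simps)
  have down: "(\<Sum>j=-N..N. t j * cos (of_int j * \<theta> - \<theta>)) = (\<Sum>j=-N..N. t (j + 1) * cos (of_int j * \<theta>))"
    using sum_int_shift[of "-N" N "\<lambda>j. t j * cos (of_int j * \<theta> - \<theta>)"] Suc.prems t_N
    by (simp add: algebra_simps)
  have "Xfun \<theta> ^ Suc n = (1 + 2 * cos \<theta>) * (\<Sum>j=-N..N. t j * cos (of_int j * \<theta>))"
    using Suc by (simp add: Xfun_def t_def)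
  also have "\<dots> = (\<Sum>j=-N..N. t j * cos (of_int j * \<theta>)) + (\<Sum>j=-N..N. t j * cos (of_int j * \<theta> + \<theta>))
      + (\<Sum>j=-N..N. t j * cos (of_int j * \<theta> - \<theta>))"
    by (simp add: cos_add cos_diff sum_distrib_left sum.distrib[symmetric] algebra_simps)
  also have "\<dots> = (\<Sum>j=-N..N. of_int (trinomial (Suc n) j) * cos (of_int j * \<theta>))"
    unfolding up down by (simp add: t_def sum.distrib[symmetric] algebra_simps)
  finally show ?case .
qed

lemma sum_symmetric_int:
  fixes f :: "int \<Rightarrow> real"
  shows "(\<Sum>j=-int m..int m. f j) = f 0 + (\<Sum>i=1..m. f (int i) + f (- int i))"
proof (induction m)
  case 0
  then show ?case by simp
next
  case (Suc m)
  have "{-int (Suc m)..int (Suc m)} = insert (- int (Suc m)) (insert (int (Suc m)) {-int m..int m})"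
    by auto
  then show ?case using Suc by (simp add: algebra_simps)
qed

lemma Xfun_power_cos_sum:
  "Xfun \<theta> ^ n = of_int (trinomial n 0) + 2 * (\<Sum>j=1..n. of_int (trinomial n (int j)) * cos (real j * \<theta>))"
proof -
  have "Xfun \<theta> ^ n = (\<Sum>j=-int n..int n. of_int (trinomial n j) * cos (of_int j * \<theta>))"
    by (rule Xfun_power_cos_sum_int) simp
  also have "\<dots> = of_int (trinomial n 0) + (\<Sum>i=1..n. 2 * (of_int (trinomial n (int i)) * cos (real i * \<theta>)))"
    unfolding sum_symmetric_int by (simp add: trinomial_uminus)
  finally show ?thesis by (simp add: sum_distrib_left)
qed

lemma sum_diff_chi:
  fixes a :: "nat \<Rightarrow> real"
  shows "(\<Sum>i=0..n. (a i - a (Suc i)) * chi i \<theta>)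
       = a 0 - a (Suc n) + 2 * (\<Sum>j=1..n. (a j - a (Suc n)) * cos (real j * \<theta>))"
proof (induction n)
  case 0
  then show ?case by (simp add: chi_def)
next
  case (Suc n)
  have chi: "chi (Suc n) \<theta> = 1 + 2 * ((\<Sum>j=1..n. cos (real j * \<theta>)) + cos (real (Suc n) * \<theta>))"
    unfolding chi_def by simp
  have "(\<Sum>j=1..n. (a j - a (Suc (Suc n))) * cos (real j * \<theta>))
     = (\<Sum>j=1..n. (a j - a (Suc n)) * cos (real j * \<theta>))
       + (a (Suc n) - a (Suc (Suc n))) * (\<Sum>j=1..n. cos (real j * \<theta>))"
    by (simp add: sum_distrib_left sum.distrib[symmetric] algebra_simps)
  then show ?case
    by (simp only: sum.atLeast0_atMost_Suc sum.nat_ivl_Suc' chi Suc.IH) (simp add: algebra_simps)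
qed

lemma Xfun_power_chi:
  "Xfun \<theta> ^ n = (\<Sum>i=0..n. of_int (trinomial n (int i) - trinomial n (int i + 1)) * chi i \<theta>)"
proof -
  define a where "a i = (of_int (trinomial n (int i)) :: real)" for i
  have "a (Suc n) = 0" by (simp add: a_def trinomial_eq_0)
  then have "(\<Sum>i=0..n. (a i - a (Suc i)) * chi i \<theta>) = Xfun \<theta> ^ n"
    unfolding sum_diff_chi Xfun_power_cos_sum by (simp add: a_def)
  then show ?thesis by (simp add: a_def add.commute)
qed

text \<open>Adding the relation at \<open>\<theta> \<pm> \<pi>/(n+1)\<close> to twice the relation at \<open>\<theta>\<close> multiplies the coefficient
  of \<open>cos j\<theta>\<close> by \<open>2 (cos (j\<pi>/(n+1)) + 1)\<close>: for top index \<open>n+1\<close> this kills the top coefficient and keeps the others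
  nonzero, so induction applies; then \<open>\<theta> = 0\<close> gives the top coefficient.\<close>

lemma cos_sum_eq_0_imp_coeff_eq_0:
  fixes w :: "nat \<Rightarrow> real"
  assumes "\<And>\<theta>. (\<Sum>j=0..n. w j * cos (real j * \<theta>)) = 0" and "j \<le> n"
  shows "w j = 0"
  using assms
proof (induction n arbitrary: w j)
  case 0
  then show ?case using "0.prems"(1)[of 0] by simp
next
  case (Suc n)
  define h where "h = pi / real (Suc n)"
  define w' where "w' j = 2 * w j * (cos (real j * h) + 1)" for j
  have "(\<Sum>j=0..n. w' j * cos (real j * \<theta>)) = 0" for \<theta>
  proof -
    have cos_sum: "cos (real j * (\<theta> + h)) + cos (real j * (\<theta> - h)) + 2 * cos (real j * \<theta>)
        = 2 * cos (real j * \<theta>) * (cos (real j * h) + 1)" for j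
      by (simp add: distrib_left right_diff_distrib cos_add cos_diff algebra_simps)
    have "0 = (\<Sum>j=0..Suc n. w j * cos (real j * (\<theta> + h))) + (\<Sum>j=0..Suc n. w j * cos (real j * (\<theta> - h)))
        + 2 * (\<Sum>j=0..Suc n. w j * cos (real j * \<theta>))"
      using Suc.prems(1) by simp
    also have "\<dots> = (\<Sum>j=0..Suc n. w j * (cos (real j * (\<theta> + h)) + cos (real j * (\<theta> - h)) + 2 * cos (real j * \<theta>)))"
      by (simp add: sum.distrib sum_distrib_left algebra_simps)
    also have "\<dots> = (\<Sum>j=0..Suc n. w' j * cos (real j * \<theta>))"
      unfolding cos_sum w'_def by (simp add: algebra_simps)
    also have "\<dots> = (\<Sum>j=0..n. w' j * cos (real j * \<theta>))"
      by (simp add: w'_def h_def)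
    finally show ?thesis by simp
  qed
  then have w'_0: "w' i = 0" if "i \<le> n" for i
    using Suc.IH that by blast
  have w_0: "w i = 0" if "i \<le> n" for i
  proof -
    have "pi * real i < pi * real (Suc n)"
      using that by (intro mult_strict_left_mono) auto
    then have "real i * h < pi"
      by (simp add: h_def field_simps)
    then have "cos pi < cos (real i * h)"
      by (intro cos_monotone_0_pi) (auto simp: h_def)
    then show ?thesis using w'_0[OF that] by (simp add: w'_def)
  qed
  with Suc.prems(1)[of 0] have "w (Suc n) = 0" by simp
  with w_0 Suc.prems(2) show ?case by (cases "j = Suc n") auto
qed

lemma chi_sum_eq_0_imp_coeff_eq_0:
  fixes e :: "nat \<Rightarrow> real"
  assumes "\<And>\<theta>. (\<Sum>i=0..n. e i * chi i \<theta>) = 0" and "i \<le> n"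
  shows "e i = 0"
proof -
  define a where "a i = (\<Sum>l=i..n. e l)" for i
  have e: "e i = a i - a (Suc i)" if "i \<le> n" for i
    using that by (simp add: a_def sum.atLeast_Suc_atMost)
  have a_Suc_n: "a (Suc n) = 0" by (simp add: a_def)
  define w where "w j = (if j = 0 then a 0 else 2 * a j)" for j
  have "(\<Sum>j=0..n. w j * cos (real j * \<theta>)) = 0" for \<theta>
  proof -
    have "(\<Sum>j=0..n. w j * cos (real j * \<theta>)) = (\<Sum>i=0..n. (a i - a (Suc i)) * chi i \<theta>)"
      by (simp add: sum_diff_chi a_Suc_n sum.atLeast_Suc_atMost[of 0 n] w_def sum_distrib_left mult.assoc)
    also have "\<dots> = (\<Sum>i=0..n. e i * chi i \<theta>)"
      by (rule sum.cong) (simp_all add: e)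
    finally show ?thesis using assms(1) by simp
  qed
  then have w_0: "w j = 0" if "j \<le> n" for j
    using that by (rule cos_sum_eq_0_imp_coeff_eq_0)
  have "a j = 0" if "j \<le> Suc n" for j
  proof (cases "j = Suc n")
    case True
    with a_Suc_n show ?thesis by simp
  next
    case False
    with that w_0[of j] show ?thesis by (simp add: w_def split: if_splits)
  qed
  then show ?thesis using e[OF assms(2)] assms(2) by simp
qed

lemma bcoef_eq_trinomial_diff: "bcoef n k = trinomial n (int k) - trinomial n (int k + 1)"
proof (cases "k \<le> n")
  case False
  then show ?thesis by (simp add: bcoef_def trinomial_eq_0)
next
  case True
  define b where "b i = trinomial n (int i) - trinomial n (int i + 1)" for i
  let ?P = "\<lambda>c. (\<forall>\<theta>. Xfun \<theta> ^ n = (\<Sum>i=0..n. of_int (c i) * chi i \<theta>)) \<and> (\<forall>i>n. c i = 0)"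
  have "(THE c. ?P c) = b"
  proof (rule the_equality)
    show "?P b"
      using Xfun_power_chi by (simp add: b_def trinomial_eq_0)
  next
    fix c assume c: "?P c"
    have "(\<Sum>i=0..n. (of_int (c i) - of_int (b i)) * chi i \<theta>) = 0" for \<theta>
      using c Xfun_power_chi[of \<theta> n] by (simp add: b_def sum_subtractf left_diff_distrib)
    then have "of_int (c i) - of_int (b i) = (0 :: real)" if "i \<le> n" for i
      using that by (rule chi_sum_eq_0_imp_coeff_eq_0)
    moreover have "c i = b i" if "n < i" for i
      using c that by (simp add: b_def trinomial_eq_0)
    ultimately show "c = b"
      by (metis eq_iff_diff_eq_0 not_le of_int_eq_iff ext)
  qed
  with True show ?thesis by (simp add: bcoef_def b_def)
qed

definition trinomial_op :: "int \<Rightarrow> (nat \<Rightarrow> int) \<Rightarrow> nat \<Rightarrow> int" where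
  "trinomial_op c f n = (int n ^ 2 - c) * f n
     - int n * (2 * int n - 1) * f (n - 1) - 3 * int n * (int n - 1) * f (n - 2)"

lemma trinomial_op_trinomial:
  assumes "2 \<le> n"
  shows "trinomial_op (j ^ 2) (\<lambda>m. trinomial m j) n = 0"
proof -
  obtain m where n: "n = Suc (Suc m)"
    using assms by (metis add_2_eq_Suc le_Suc_ex)
  have "trinomial_op (j ^ 2) (\<lambda>m. trinomial m j) n
      = - (int m + 2 + j) * ((j - 1 - 1 - int m) * trinomial m (j - 1 - 1)
             + (j - 1) * trinomial m (j - 1) + (j - 1 + 1 + int m) * trinomial m (j - 1 + 1))
        - j * ((j - 1 - int m) * trinomial m (j - 1) + j * trinomial m j
             + (j + 1 + int m) * trinomial m (j + 1))
        + (int m + 2 - j) * ((j + 1 - 1 - int m) * trinomial m (j + 1 - 1)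
             + (j + 1) * trinomial m (j + 1) + (j + 1 + 1 + int m) * trinomial m (j + 1 + 1))"
    by (simp add: n trinomial_op_def algebra_simps power2_eq_square)
  then show ?thesis
    by (simp only: trinomial_contiguous)
qed

lemma trinomial_op_commute:
  "trinomial_op a (trinomial_op b f) n = trinomial_op b (trinomial_op a f) n"
  by (simp add: trinomial_op_def algebra_simps)

lemma trinomial_op_diff:
  "trinomial_op c (\<lambda>m. f m - g m) = (\<lambda>n. trinomial_op c f n - trinomial_op c g n)"
  by (simp add: fun_eq_iff trinomial_op_def algebra_simps)

lemma trinomial_op_trinomial_op_eq_0:
  assumes "\<And>m. 2 \<le> m \<Longrightarrow> trinomial_op c f m = 0" and "4 \<le> n"
  shows "trinomial_op d (trinomial_op c f) n = 0"
proof -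
  have "trinomial_op c f n = 0" "trinomial_op c f (n - 1) = 0" "trinomial_op c f (n - 2) = 0"
    using assms by (auto intro!: assms(1))
  then show ?thesis by (simp add: trinomial_op_def)
qed

lemma trinomial_op_trinomial_op_expand:
  fixes K :: int
  assumes "4 \<le> n"
  shows "trinomial_op ((K + 1) ^ 2) (trinomial_op (K ^ 2) f) n
    = (int n^2 - (K+1)^2) * (int n^2 - K^2) * f n
      + - 2 * int n * (2*int n - 1) * (int n + K) * (int n - K - 1) * f (n - 1)
      + - 2 * int n * (int n - 1) * (int n^2 - 2*int n + 3 - 3*K*(K+1)) * f (n - 2)
      + 6 * int n * (int n - 1) * (int n - 2) * (2*int n - 3) * f (n - 3)
      + 9 * int n * (int n - 1) * (int n - 2) * (int n - 3) * f (n - 4)"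
proof -
  obtain m where n: "n = m + 4"
    using assms by (metis add.commute le_Suc_ex)
  show ?thesis
    by (simp add: n trinomial_op_def numeral_eq_Suc algebra_simps power2_eq_square)
qed

theorem theorem4:
  fixes n k :: nat
  assumes "n \<ge> 4"
  shows "let N = int n; K = int k;
           A = (N^2 - (K+1)^2) * (N^2 - K^2);
           B = - 2 * N * (2*N - 1) * (N + K) * (N - K - 1);
           C = - 2 * N * (N - 1) * (N^2 - 2*N + 3 - 3*K*(K+1));
           D = 6 * N * (N - 1) * (N - 2) * (2*N - 3);
           E = 9 * N * (N - 1) * (N - 2) * (N - 3)
         in A * bcoef n k + B * bcoef (n-1) k + C * bcoef (n-2) k
            + D * bcoef (n-3) k + E * bcoef (n-4) k = 0"
proof -
  let ?t = "\<lambda>j m. trinomial m j" and ?K = "int k"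
  have "trinomial_op ((?K + 1) ^ 2) (trinomial_op (?K ^ 2) (?t ?K)) n = 0"
    by (intro trinomial_op_trinomial_op_eq_0 trinomial_op_trinomial assms)
  moreover have "trinomial_op (?K ^ 2) (trinomial_op ((?K + 1) ^ 2) (?t (?K + 1))) n = 0"
    by (intro trinomial_op_trinomial_op_eq_0 trinomial_op_trinomial assms)
  ultimately have "trinomial_op ((?K + 1) ^ 2) (trinomial_op (?K ^ 2) (\<lambda>m. bcoef m k)) n = 0"
    by (simp add: bcoef_eq_trinomial_diff trinomial_op_diff trinomial_op_commute)
  then show ?thesis
    by (simp add: trinomial_op_trinomial_op_expand[OF assms] Let_def)
qed

end
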